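(* Let $V$ be a vector space of uncountable dimension over a field $\mathbb{F}$, and let $u$ be an endomorphism of $V$ with no dominant eigenvalue. Then $V^u$ has a good stratification.
   Context: A scalar $\lambda$ is a dominant eigenvalue of $u$ if $\operatorname{rk}(u-\lambda\,\mathrm{id}_V)<\dim V$. $V^u$ is the $\mathbb{F}[t]$-module with underlying space $V$ and $t\cdot x:=u(x)$. A stratification of a non-zero $\mathbb{F}[t]$-module $M$ is an increasing family $(M_\alpha)_{\alpha\in D}$ of submodules indexed by a well-ordered set $D$ such that each quotient $M_\alpha/\sum_{\beta<\alpha}M_\beta$ is non-zero and monogenous (cyclic), and $M=\sum_{\alpha\in D}M_\alpha$; its dimension sequence is $n_\alpha:=\dim_{\mathbb{F}}(M_\alpha/\sum_{\beta<\alpha}M_\beta)\in\mathbb{N}^*\cup\{+\infty\}$. It is good if (a) $n_\alpha\ge 2$ whenever $\alpha$ is the minimum of $D$ or the successor of some element of $D$, and (b) $D$ has no maximum. *)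

theory Defs
  imports Complex_Main "HOL-Library.Extended_Nat"
begin

text \<open>Vector space V = the whole type 'b over the field 'a, with scalar
multiplication scale (locale vector_space from HOL.Vector_Spaces).\<close>

definition basis_of :: "('a::field \<Rightarrow> 'b::ab_group_add \<Rightarrow> 'b) \<Rightarrow> 'b set \<Rightarrow> 'b set \<Rightarrow> bool" where
  "basis_of scale S B \<longleftrightarrow> B \<subseteq> S \<and> \<not> module.dependent scale B \<and> module.span scale B = S"

definition dim_less :: "('a::field \<Rightarrow> 'b::ab_group_add \<Rightarrow> 'b) \<Rightarrow> 'b set \<Rightarrow> 'b set \<Rightarrow> bool" where
  "dim_less scale S T \<longleftrightarrow>
     (\<exists>B C. basis_of scale S B \<and> basis_of scale T C \<and> (card_of B, card_of C) \<in> ordLess)"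

definition dominant_eigenvalue :: "('a::field \<Rightarrow> 'b::ab_group_add \<Rightarrow> 'b) \<Rightarrow> ('b \<Rightarrow> 'b) \<Rightarrow> 'a \<Rightarrow> bool" where
  "dominant_eigenvalue scale u lam \<longleftrightarrow> dim_less scale (range (\<lambda>x. u x - scale lam x)) UNIV"

definition submodule :: "('a::field \<Rightarrow> 'b::ab_group_add \<Rightarrow> 'b) \<Rightarrow> ('b \<Rightarrow> 'b) \<Rightarrow> 'b set \<Rightarrow> bool" where
  "submodule scale u N \<longleftrightarrow> module.subspace scale N \<and> u ` N \<subseteq> N"

definition msum :: "('a::field \<Rightarrow> 'b::ab_group_add \<Rightarrow> 'b) \<Rightarrow> 'b set set \<Rightarrow> 'b set" where
  "msum scale F = module.span scale (\<Union>F)"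

definition indep_mod :: "('a::field \<Rightarrow> 'b::ab_group_add \<Rightarrow> 'b) \<Rightarrow> 'b set \<Rightarrow> 'b set \<Rightarrow> bool" where
  "indep_mod scale N S \<longleftrightarrow> finite S \<and>
     (\<forall>c. (\<Sum>s\<in>S. scale (c s) s) \<in> N \<longrightarrow> (\<forall>s\<in>S. c s = 0))"

text \<open>dim_F (M / N) in N \<union> {infinity}, for subspaces N \<subseteq> M.\<close>
definition qdim :: "('a::field \<Rightarrow> 'b::ab_group_add \<Rightarrow> 'b) \<Rightarrow> 'b set \<Rightarrow> 'b set \<Rightarrow> enat" where
  "qdim scale M N = Sup {enat (card S) | S. S \<subseteq> M \<and> indep_mod scale N S}"

text \<open>M / N is monogenous (cyclic) as F[t]-module: generated by the class of one x.\<close>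
definition monogenous_quot :: "('a::field \<Rightarrow> 'b::ab_group_add \<Rightarrow> 'b) \<Rightarrow> ('b \<Rightarrow> 'b) \<Rightarrow> 'b set \<Rightarrow> 'b set \<Rightarrow> bool" where
  "monogenous_quot scale u M N \<longleftrightarrow>
     (\<exists>x\<in>M. M = module.span scale (N \<union> {(u ^^ k) x | k. True}))"

definition stratification ::
  "('a::field \<Rightarrow> 'b::ab_group_add \<Rightarrow> 'b) \<Rightarrow> ('b \<Rightarrow> 'b) \<Rightarrow> ('d \<times> 'd) set \<Rightarrow> ('d \<Rightarrow> 'b set) \<Rightarrow> bool" where
  "stratification scale u r Mf \<longleftrightarrow>
     Well_order r \<and>
     (\<forall>\<alpha>\<in>Field r. submodule scale u (Mf \<alpha>)) \<and>
     (\<forall>\<alpha>\<in>Field r. \<forall>\<beta>\<in>Field r. (\<beta>, \<alpha>) \<in> r \<longrightarrow> Mf \<beta> \<subseteq> Mf \<alpha>) \<and>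
     (\<forall>\<alpha>\<in>Field r.
        let N = msum scale {Mf \<beta> | \<beta>. \<beta> \<in> Field r \<and> (\<beta>, \<alpha>) \<in> r \<and> \<beta> \<noteq> \<alpha>} in
        \<not> Mf \<alpha> \<subseteq> N \<and> monogenous_quot scale u (Mf \<alpha>) N) \<and>
     msum scale (Mf ` Field r) = UNIV"

definition strat_dim ::
  "('a::field \<Rightarrow> 'b::ab_group_add \<Rightarrow> 'b) \<Rightarrow> ('d \<times> 'd) set \<Rightarrow> ('d \<Rightarrow> 'b set) \<Rightarrow> 'd \<Rightarrow> enat" where
  "strat_dim scale r Mf \<alpha> =
     qdim scale (Mf \<alpha>) (msum scale {Mf \<beta> | \<beta>. \<beta> \<in> Field r \<and> (\<beta>, \<alpha>) \<in> r \<and> \<beta> \<noteq> \<alpha>})"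

definition is_minimum :: "('d \<times> 'd) set \<Rightarrow> 'd \<Rightarrow> bool" where
  "is_minimum r \<alpha> \<longleftrightarrow> \<alpha> \<in> Field r \<and> (\<forall>\<gamma>\<in>Field r. (\<alpha>, \<gamma>) \<in> r)"

definition is_successor :: "('d \<times> 'd) set \<Rightarrow> 'd \<Rightarrow> 'd \<Rightarrow> bool" where
  "is_successor r \<alpha> \<beta> \<longleftrightarrow> \<alpha> \<in> Field r \<and> \<beta> \<in> Field r \<and> (\<beta>, \<alpha>) \<in> r \<and> \<beta> \<noteq> \<alpha> \<and>
     (\<forall>\<gamma>\<in>Field r. (\<beta>, \<gamma>) \<in> r \<and> \<beta> \<noteq> \<gamma> \<longrightarrow> (\<alpha>, \<gamma>) \<in> r)"

definition good_stratification ::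
  "('a::field \<Rightarrow> 'b::ab_group_add \<Rightarrow> 'b) \<Rightarrow> ('b \<Rightarrow> 'b) \<Rightarrow> ('d \<times> 'd) set \<Rightarrow> ('d \<Rightarrow> 'b set) \<Rightarrow> bool" where
  "good_stratification scale u r Mf \<longleftrightarrow>
     stratification scale u r Mf \<and>
     (\<forall>\<alpha>\<in>Field r. (is_minimum r \<alpha> \<or> (\<exists>\<beta>\<in>Field r. is_successor r \<alpha> \<beta>))
                    \<longrightarrow> strat_dim scale r Mf \<alpha> \<ge> 2) \<and>
     (\<forall>\<alpha>\<in>Field r. \<exists>\<beta>\<in>Field r. (\<alpha>, \<beta>) \<in> r \<and> \<alpha> \<noteq> \<beta>)"

end

theory Submission
  imports Defs "HOL-Library.Countable_Set_Type"
begin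

text \<open>Well-order a basis \<open>B\<close> by its initial ordinal and index the strata by
  \<open>\<omega> \<cdot> (1 + B)\<close>. The stratum of an index is spanned by the orbits of all earlier generators
  together with the orbit of its own generator \<open>x\<close>. At the start of the block of a basis vector
  \<open>b\<close> not yet covered, \<open>x = b\<close>; such indices are limits, so condition (a) says nothing about
  them. Everywhere else \<open>x\<close> is chosen with \<open>x, u x\<close> independent modulo the span \<open>N\<close> of the
  earlier orbits. Such an \<open>x\<close> exists because \<open>N\<close> is spanned by fewer than \<open>dim V\<close> vectors (a
  proper initial segment of the index order is countable or smaller than \<open>B\<close>, and orbits are
  countable; this is where uncountability enters): otherwise \<open>u\<close> would act on \<open>V / N\<close> as a
  scalar \<open>\<lambda>\<close>, so \<open>range (u - \<lambda>)\<close> would lie in \<open>N\<close> and \<open>\<lambda>\<close> would be a dominant eigenvalue.\<close>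

unbundle cardinal_syntax

lemma card_of_insert_ordLess:
  assumes "|A| <o |B|" and "infinite B"
  shows "|insert a A| <o |B|"
proof -
  have "|{a}| <o |B|"
    by (rule finite_ordLess_infinite[OF card_of_Well_order card_of_Well_order, unfolded Field_card_of])
       (simp_all add: assms(2))
  then have "|{a} \<union> A| <o |B|" using card_of_Un_ordLess_infinite assms by blast
  then show ?thesis by simp
qed

lemma card_of_Times_nat_ordLess:
  assumes A: "|A| <o |B|" and B: "uncountable B"
  shows "|A \<times> (UNIV::nat set)| <o |B|"
proof (cases "countable A")
  case True
  then have "\<not> |B| \<le>o |A \<times> (UNIV::nat set)|" using B countable_ordLeq by blast
  then show ?thesis using not_ordLeq_iff_ordLess[OF card_of_Well_order card_of_Well_order] by blast
next
  case False
  then have "infinite A" using countable_finite by blast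
  then have "|A \<times> (UNIV::nat set)| =o |A|"
    using card_of_Times_infinite[of A "UNIV::nat set"] infinite_iff_card_of_nat by blast
  then show ?thesis using A by (rule ordIso_ordLess_trans)
qed

lemma card_of_Times_nat_ordLeq:
  assumes "infinite A"
  shows "|A \<times> (UNIV::nat set)| \<le>o |A|"
  using card_of_Times_infinite[of A "UNIV::nat set"] assms infinite_iff_card_of_nat ordIso_iff_ordLeq
  by blast

lemma card_of_under_ordLess:
  assumes "Card_order r" and "b \<in> Field r" and "infinite (Field r)"
  shows "|under r b| <o |Field r|"
proof -
  have "|underS r b| <o |Field r|"
    using card_of_underS[OF assms(1,2)] card_of_Field_ordIso[OF assms(1)] ordLess_ordIso_trans
      ordIso_symmetric by blast
  moreover have "under r b \<subseteq> insert b (underS r b)" unfolding under_def underS_def by blast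
  ultimately show ?thesis
    by (meson card_of_insert_ordLess[OF _ assms(3)] card_of_mono1 ordLeq_ordLess_trans)
qed

lemma card_of_option_image_ordLess:
  assumes "|A| <o |B|" and "infinite B"
  shows "|insert None (Some ` A)| <o |B|"
  using card_of_insert_ordLess[OF ordLeq_ordLess_trans[OF card_of_image assms(1)] assms(2)] .

lemma card_of_option_image_ordLeq:
  assumes "infinite A"
  shows "|insert None (Some ` A)| \<le>o |A|"
proof -
  have "|{None} \<union> Some ` A| \<le>o |A|"
    by (rule card_of_Un_ordLeq_infinite_Field[where r = "|A|", unfolded Field_card_of])
       (auto simp: assms card_of_image card_of_card_order_on ordLeq3_finite_infinite)
  then show ?thesis by simp
qed

context vector_space
begin

lemma independent_card_of_ordLeq_span:
  assumes ind: "independent I" and sub: "I \<subseteq> span S"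
  shows "|I| \<le>o |S|"
proof -
  obtain C where C: "C \<subseteq> S" "independent C" "S \<subseteq> span C"
    by (rule maximal_independent_subset)
  then have "I \<subseteq> span C" using sub span_mono[OF C(3)] span_span by blast
  then obtain D where D: "I \<subseteq> D" "D \<subseteq> span C" "independent D" "span C \<subseteq> span D"
    by (rule maximal_independent_subset_extend[OF _ ind])
  then have "span D = span C" using span_minimal[OF D(2) subspace_span] by blast
  then obtain f where "bij_betw f D C" using bij_if_span_eq_span_bases D(3) C(2) by blast
  then have "|D| =o |C|" by (rule card_of_ordIsoI)
  then show ?thesis
    using card_of_mono1[OF D(1)] card_of_mono1[OF C(1)]
    by (meson ordIso_imp_ordLeq ordLeq_transitive)
qed

lemma subspace_scale_cancel:
  assumes "subspace N" and "c \<noteq> 0" and "c *s x \<in> N"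
  shows "x \<in> N"
  using subspace_scale[OF assms(1,3), of "inverse c"] assms(2) by simp

lemma coefficients_zero_mod_subspace:
  assumes N: "subspace N" and y: "y \<notin> N" and z: "\<And>c. z - c *s y \<notin> N"
    and comb: "a *s z + b *s y \<in> N"
  shows "a = 0" and "b = 0"
proof -
  show a: "a = 0"
  proof (rule ccontr)
    assume "a \<noteq> 0"
    then have "a *s (z - (- b / a) *s y) = a *s z + b *s y"
      by (simp add: scale_right_distrib)
    then have "z - (- b / a) *s y \<in> N" using subspace_scale_cancel[OF N \<open>a \<noteq> 0\<close>] comb by simp
    with z show False by blast
  qed
  show "b = 0"
    using subspace_scale_cancel[OF N, of b y] comb y a by (cases "b = 0") simp_all
qed

end

locale endomorphism = vector_space scale
  for scale :: "'a::field \<Rightarrow> 'b::ab_group_add \<Rightarrow> 'b" (infixr "*s" 75) +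
  fixes u :: "'b \<Rightarrow> 'b"
  assumes linear_u: "Vector_Spaces.linear scale scale u"
begin

lemma module_hom_u: "module_hom scale scale u"
  using linear_u by (simp add: linear_iff_module_hom)

lemma u_add: "u (x + y) = u x + u y"
  by (rule module_hom.add[OF module_hom_u])

lemma u_diff: "u (x - y) = u x - u y"
  by (rule module_hom.diff[OF module_hom_u])

lemma u_scale: "u (c *s x) = c *s u x"
  by (rule module_hom.scale[OF module_hom_u])

lemma span_invariant:
  assumes "u ` S \<subseteq> S"
  shows "u ` span S \<subseteq> span S"
  using module_hom.span_image[OF module_hom_u, of S] span_mono[OF assms] by simp

lemma subspace_range_shift: "subspace (range (\<lambda>z. u z - c *s z))"
proof -
  have "module_hom scale scale (\<lambda>z. u z - c *s z)"
    unfolding module_hom_iff using module_axioms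
    by (simp add: u_add u_scale scale_right_distrib scale_right_diff_distrib mult.commute)
  then show ?thesis using module_hom.subspace_image subspace_UNIV by blast
qed

definition orbit :: "'b \<Rightarrow> 'b set" where
  "orbit z = {(u ^^ k) z | k. True}"

lemma orbit_invariant: "u ` orbit z \<subseteq> orbit z"
proof
  fix v assume "v \<in> u ` orbit z"
  then obtain k where "v = (u ^^ Suc k) z" unfolding orbit_def by auto
  then show "v \<in> orbit z" unfolding orbit_def by blast
qed

lemma self_in_orbit: "z \<in> orbit z"
proof -
  have "z = (u ^^ 0) z" by simp
  then show ?thesis unfolding orbit_def by blast
qed

lemma image_in_orbit: "u z \<in> orbit z"
proof -
  have "u z = (u ^^ 1) z" by simp
  then show ?thesis unfolding orbit_def by blast
qed

definition indep_pair_mod :: "'b set \<Rightarrow> 'b \<Rightarrow> bool" where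
  "indep_pair_mod N y \<longleftrightarrow> y \<noteq> u y \<and> indep_mod scale N {y, u y}"

lemma indep_pair_mod_not_in:
  assumes "indep_pair_mod N y"
  shows "y \<notin> N"
proof
  let ?c = "\<lambda>s. if s = y then 1 else 0 :: 'a"
  have "\<forall>c. (\<Sum>s\<in>{y, u y}. c s *s s) \<in> N \<longrightarrow> (\<forall>s\<in>{y, u y}. c s = 0)"
    using assms unfolding indep_pair_mod_def indep_mod_def by blast
  then have "(\<Sum>s\<in>{y, u y}. ?c s *s s) \<in> N \<longrightarrow> (\<forall>s\<in>{y, u y}. ?c s = 0)"
    by (rule spec)
  moreover have "(\<Sum>s\<in>{y, u y}. ?c s *s s) = y"
    using assms unfolding indep_pair_mod_def by auto
  moreover assume "y \<in> N"
  ultimately show False by simp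
qed

lemma eigenvector_mod_if_not_indep_pair:
  assumes N: "subspace N" and y: "y \<notin> N" and not_pair: "\<not> indep_pair_mod N y"
  shows "\<exists>lam. u y - lam *s y \<in> N"
proof (rule ccontr)
  assume none: "\<nexists>lam. u y - lam *s y \<in> N"
  then have "u y - 1 *s y \<notin> N" by blast
  then have "y \<noteq> u y" using subspace_0[OF N] by auto
  moreover have "indep_mod scale N {y, u y}"
    unfolding indep_mod_def
  proof (intro conjI allI impI ballI)
    fix c assume "(\<Sum>s\<in>{y, u y}. c s *s s) \<in> N"
    then have "c (u y) *s u y + c y *s y \<in> N" using \<open>y \<noteq> u y\<close> by (simp add: add.commute)
    then have "c (u y) = 0" "c y = 0"
      using coefficients_zero_mod_subspace[OF N y] none by blast+
    then show "c s = 0" if "s \<in> {y, u y}" for s using that by blast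
  qed simp
  ultimately show False using not_pair unfolding indep_pair_mod_def by blast
qed

text \<open>The scalar of \<open>z\<close> is compared with those of \<open>y\<close> and \<open>z + y\<close>, unless \<open>z\<close> is a
  multiple of \<open>y\<close> modulo \<open>N\<close>.\<close>

lemma scalar_mod_if_no_indep_pair:
  assumes N: "subspace N" and inv: "u ` N \<subseteq> N" and y: "y \<notin> N"
    and no_pair: "\<And>x. \<not> indep_pair_mod N x"
  shows "\<exists>lam. \<forall>z. u z - lam *s z \<in> N"
proof -
  have eigen: "\<exists>lam. u x - lam *s x \<in> N" if "x \<notin> N" for x
    using eigenvector_mod_if_not_indep_pair[OF N that no_pair] .
  obtain lam where lam: "u y - lam *s y \<in> N" using eigen[OF y] by blast
  have "u z - lam *s z \<in> N" for z
  proof (cases "\<exists>c. z - c *s y \<in> N")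
    case True
    then obtain c where c: "z - c *s y \<in> N" by blast
    then have uc: "u (z - c *s y) \<in> N" using inv by blast
    have "u z - lam *s z = u (z - c *s y) - lam *s (z - c *s y) + c *s (u y - lam *s y)"
      by (simp add: u_diff u_scale scale_right_diff_distrib algebra_simps)
    also have "\<dots> \<in> N"
      by (intro uc c lam subspace_add[OF N] subspace_diff[OF N] subspace_scale[OF N])
    finally show ?thesis .
  next
    case False
    then have zy: "\<And>c. z - c *s y \<notin> N" by blast
    have "z \<notin> N" using zy[of 0] by simp
    moreover have "z + y \<notin> N" using zy[of "-1"] by simp
    ultimately obtain \<mu> \<nu> where \<mu>: "u z - \<mu> *s z \<in> N" and \<nu>: "u (z + y) - \<nu> *s (z + y) \<in> N"
      using eigen by blast
    have "(\<mu> - \<nu>) *s z + (lam - \<nu>) *s y = (u (z + y) - \<nu> *s (z + y)) - (u z - \<mu> *s z) - (u y - lam *s y)"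
      by (simp add: u_add scale_left_diff_distrib scale_right_distrib algebra_simps)
    also have "\<dots> \<in> N" by (intro \<mu> \<nu> lam subspace_diff[OF N])
    finally have comb: "(\<mu> - \<nu>) *s z + (lam - \<nu>) *s y \<in> N" .
    have "\<mu> - \<nu> = 0" "lam - \<nu> = 0" by (rule coefficients_zero_mod_subspace[OF N y zy comb])+
    then show ?thesis using \<mu> by simp
  qed
  then show ?thesis by blast
qed

lemma exists_indep_pair_mod:
  assumes B: "independent B" "span B = UNIV"
    and no_dominant: "\<And>lam. \<not> dominant_eigenvalue scale u lam"
    and small: "|S| <o |B|" and inv: "u ` S \<subseteq> S"
  shows "\<exists>y. indep_pair_mod (span S) y"
proof (rule ccontr)
  assume "\<nexists>y. indep_pair_mod (span S) y"
  moreover obtain y where "y \<notin> span S"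
  proof -
    have "\<not> B \<subseteq> span S"
      using independent_card_of_ordLeq_span[OF B(1)] small not_ordLess_ordLeq by blast
    then show ?thesis using that by blast
  qed
  ultimately obtain lam where lam: "\<forall>z. u z - lam *s z \<in> span S"
    using scalar_mod_if_no_indep_pair[OF subspace_span span_invariant[OF inv]] by blast
  let ?R = "range (\<lambda>z. u z - lam *s z)"
  obtain C where C: "C \<subseteq> ?R" "independent C" "?R \<subseteq> span C"
    by (rule maximal_independent_subset)
  then have "basis_of scale ?R C"
    unfolding basis_of_def using span_minimal[OF C(1) subspace_range_shift] by blast
  moreover have "basis_of scale UNIV B" unfolding basis_of_def using B by blast
  moreover have "|C| <o |B|"
    using independent_card_of_ordLeq_span[OF C(2)] C(1) lam small ordLeq_ordLess_trans by blast
  ultimately have "dominant_eigenvalue scale u lam"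
    unfolding dominant_eigenvalue_def dim_less_def by blast
  with no_dominant show False by blast
qed

end

text \<open>The index order: \<open>W\<close> with a new least element \<open>None\<close>, each point replaced by a copy
  of \<open>\<omega>\<close>, i.e. the ordinal \<open>\<omega> \<cdot> (1 + W)\<close>.\<close>

definition opt_less :: "'c rel \<Rightarrow> 'c option \<Rightarrow> 'c option \<Rightarrow> bool" where
  "opt_less W a c \<longleftrightarrow>
     (a = None \<and> c \<noteq> None) \<or> (\<exists>b d. a = Some b \<and> c = Some d \<and> (b, d) \<in> W \<and> b \<noteq> d)"

definition block_field :: "'c rel \<Rightarrow> ('c option \<times> nat) set" where
  "block_field W = insert None (Some ` Field W) \<times> UNIV"

definition block_order :: "'c rel \<Rightarrow> ('c option \<times> nat) rel" where
  "block_order W = {(p, q). p \<in> block_field W \<and> q \<in> block_field W \<and>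
     (opt_less W (fst p) (fst q) \<or> fst p = fst q \<and> snd p \<le> snd q)}"

lemma opt_less_irrefl: "\<not> opt_less W a a"
  unfolding opt_less_def by auto

lemma opt_less_trans:
  assumes W: "Well_order W" and "opt_less W a b" "opt_less W b c"
  shows "opt_less W a c"
proof -
  have "trans W" "antisym W"
    using W unfolding well_order_on_def linear_order_on_def partial_order_on_def preorder_on_def
    by auto
  then show ?thesis using assms(2,3) unfolding opt_less_def trans_def antisym_def by blast
qed

lemma opt_less_total:
  assumes W: "Well_order W" and "a \<in> insert None (Some ` Field W)" "c \<in> insert None (Some ` Field W)"
    and "a \<noteq> c"
  shows "opt_less W a c \<or> opt_less W c a"
proof -
  have "total_on (Field W) W"
    using W unfolding well_order_on_def linear_order_on_def by auto
  then show ?thesis using assms(2-4) unfolding opt_less_def total_on_def by fastforce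
qed

lemma wf_opt_less:
  assumes W: "Well_order W"
  shows "wf {(a, c). opt_less W a c}"
proof -
  have "wf (map_prod Some Some ` (W - Id))"
    using W by (intro wf_map_prod_image) (simp_all add: well_order_on_def)
  moreover have "wf {(a, c). a = None \<and> c \<noteq> (None :: 'c option)}"
    by (rule wf_subset[OF wf_measure[of "\<lambda>a. if a = None then 0 else 1::nat"]]) auto
  ultimately have "wf ({(a, c). a = None \<and> c \<noteq> None} \<union> map_prod Some Some ` (W - Id))"
    by (intro wf_Un) auto
  then show ?thesis by (rule wf_subset) (auto simp: opt_less_def)
qed

lemma Field_block_order: "Field (block_order W) = block_field W"
proof
  show "Field (block_order W) \<subseteq> block_field W" unfolding block_order_def Field_def by auto
  show "block_field W \<subseteq> Field (block_order W)"
  proof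
    fix p assume "p \<in> block_field W"
    then have "(p, p) \<in> block_order W" unfolding block_order_def by simp
    then show "p \<in> Field (block_order W)" by (rule FieldI1)
  qed
qed

lemma block_order_strict_iff:
  "(p, q) \<in> block_order W - Id \<longleftrightarrow> p \<in> block_field W \<and> q \<in> block_field W \<and>
     (opt_less W (fst p) (fst q) \<or> fst p = fst q \<and> snd p < snd q)"
  by (cases p, cases q) (auto simp: block_order_def opt_less_def)

lemma wf_block_order:
  assumes "Well_order W"
  shows "wf (block_order W - Id)"
proof -
  have "block_order W - Id \<subseteq> {(a, c). opt_less W a c} <*lex*> less_than"
    by (auto simp: block_order_def)
  then show ?thesis by (rule wf_subset[OF wf_lex_prod[OF wf_opt_less[OF assms] wf_less_than]])
qed

lemma Well_order_block_order:
  assumes W: "Well_order W"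
  shows "Well_order (block_order W)"
  unfolding well_order_on_def linear_order_on_def partial_order_on_def preorder_on_def
    Field_block_order
proof (intro conjI)
  show "block_order W \<subseteq> block_field W \<times> block_field W"
    unfolding block_order_def by auto
  show "refl_on (block_field W) (block_order W)"
    unfolding refl_on_def block_order_def by auto
  show "trans (block_order W)"
    unfolding trans_def block_order_def using opt_less_trans[OF W] by auto
  show "antisym (block_order W)"
    unfolding antisym_def block_order_def
    by (auto dest: opt_less_trans[OF W] simp: opt_less_irrefl prod_eq_iff)
  show "total_on (block_field W) (block_order W)"
    unfolding total_on_def
  proof (intro ballI impI)
    fix p q assume p: "p \<in> block_field W" and q: "q \<in> block_field W" and "p \<noteq> q"
    show "(p, q) \<in> block_order W \<or> (q, p) \<in> block_order W"
    proof (cases "fst p = fst q")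
      case True
      then show ?thesis using p q unfolding block_order_def by auto
    next
      case False
      have "fst p \<in> insert None (Some ` Field W)" "fst q \<in> insert None (Some ` Field W)"
        using p q unfolding block_field_def by auto
      then have "opt_less W (fst p) (fst q) \<or> opt_less W (fst q) (fst p)"
        using opt_less_total[OF W _ _ False] by blast
      then show ?thesis using p q unfolding block_order_def by auto
    qed
  qed
  show "wf (block_order W - Id)" by (rule wf_block_order[OF W])
qed

lemma block_order_Suc:
  assumes "p \<in> block_field W"
  shows "(p, (fst p, Suc (snd p))) \<in> block_order W - Id"
  using assms unfolding block_order_strict_iff by (auto simp: block_field_def)

lemma below_block_None:
  assumes "(q, (None, n)) \<in> block_order W"
  shows "fst q = None"
  using assms unfolding block_order_def opt_less_def by auto

lemma below_block_Some:
  assumes W: "Well_order W" and "(q, (Some b, n)) \<in> block_order W"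
  shows "fst q \<in> insert None (Some ` under W b)"
proof -
  have "refl_on (Field W) W"
    using W by (simp add: well_order_on_def linear_order_on_def partial_order_on_def preorder_on_def)
  then show ?thesis
    using assms(2) unfolding block_order_def opt_less_def block_field_def under_def
    by (auto dest: refl_onD)
qed

lemma block_start_not_minimum: "\<not> is_minimum (block_order W) (Some b, 0)"
proof -
  have "(None, 0) \<in> Field (block_order W)" by (simp add: Field_block_order block_field_def)
  moreover have "((Some b, 0), (None, 0)) \<notin> block_order W" by (simp add: block_order_def opt_less_def)
  ultimately show ?thesis unfolding is_minimum_def by blast
qed

lemma block_start_not_successor:
  assumes W: "Well_order W"
  shows "\<not> is_successor (block_order W) (Some b, 0) \<beta>"
proof
  assume succ: "is_successor (block_order W) (Some b, 0) \<beta>"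
  obtain a m where \<beta>: "\<beta> = (a, m)" by (cases \<beta>)
  have "(\<beta>, (Some b, 0)) \<in> block_order W - Id" using succ unfolding is_successor_def by blast
  then have less: "opt_less W a (Some b)" and "\<beta> \<in> block_field W"
    unfolding block_order_strict_iff \<beta> by auto
  have "(a, Suc m) \<in> block_field W" "(\<beta>, (a, Suc m)) \<in> block_order W - Id"
    using block_order_Suc[OF \<open>\<beta> \<in> block_field W\<close>] \<beta> \<open>\<beta> \<in> block_field W\<close>
    by (auto simp: block_field_def)
  then have "((Some b, 0), (a, Suc m)) \<in> block_order W"
    using succ unfolding is_successor_def Field_block_order by blast
  then have "opt_less W (Some b) a \<or> Some b = a" unfolding block_order_def by auto
  then show False using less opt_less_trans[OF W] opt_less_irrefl by metis
qed

locale strata_construction = endomorphism scale u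
  for scale :: "'a::field \<Rightarrow> 'b::ab_group_add \<Rightarrow> 'b" (infixr "*s" 75) and u +
  fixes B :: "'b set"
  assumes independent_B: "independent B" and span_B: "span B = UNIV"
    and uncountable_B: "uncountable B"
    and no_dominant_eigenvalue: "\<And>lam. \<not> dominant_eigenvalue scale u lam"
begin

abbreviation Ix :: "('b option \<times> nat) rel" where
  "Ix \<equiv> block_order |B|"

lemma infinite_B: "infinite B"
  using uncountable_B countable_finite by blast

lemma Well_order_Ix: "Well_order Ix"
  by (rule Well_order_block_order[OF card_of_Well_order])

lemma trans_Ix_strict: "trans (Ix - Id)"
  using Well_order_Ix
  by (intro trans_diff_Id) (simp_all add: well_order_on_def linear_order_on_def
      partial_order_on_def preorder_on_def)

lemma card_of_earlier_indices_ordLess: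
  assumes "p \<in> block_field |B|"
  shows "|{q. (q, p) \<in> Ix - Id}| <o |B|"
proof -
  obtain A where A: "|A| <o |B|" and sub: "{q. (q, p) \<in> Ix} \<subseteq> A \<times> UNIV"
  proof (cases "fst p")
    case None
    then have "{q. (q, p) \<in> Ix} \<subseteq> {None} \<times> UNIV"
      using below_block_None[of _ "snd p" "|B|"] by (cases p) auto
    moreover have "|{None :: 'b option}| <o |B|"
      by (rule finite_ordLess_infinite[OF card_of_Well_order card_of_Well_order, unfolded Field_card_of])
         (simp_all add: infinite_B)
    ultimately show ?thesis using that by blast
  next
    case (Some b)
    then have "b \<in> B" using assms unfolding block_field_def Field_card_of by auto
    then have "|insert None (Some ` under |B| b)| <o |B|"
      using card_of_option_image_ordLess[OF card_of_under_ordLess, of "|B|" b, unfolded Field_card_of]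
        infinite_B card_of_card_order_on by blast
    moreover have "{q. (q, p) \<in> Ix} \<subseteq> insert None (Some ` under |B| b) \<times> UNIV"
      using below_block_Some[OF card_of_Well_order, of _ b "snd p"] Some by (cases p) force
    ultimately show ?thesis using that by blast
  qed
  then have "{q. (q, p) \<in> Ix - Id} \<subseteq> A \<times> UNIV" by blast
  then show ?thesis
    by (rule ordLeq_ordLess_trans[OF card_of_mono1 card_of_Times_nat_ordLess[OF A uncountable_B]])
qed

definition earlier_orbits :: "('b option \<times> nat \<Rightarrow> 'b) \<Rightarrow> 'b option \<times> nat \<Rightarrow> 'b set" where
  "earlier_orbits g p = (\<Union>q \<in> {q. (q, p) \<in> Ix - Id}. orbit (g q))"

lemma earlier_orbits_invariant: "u ` earlier_orbits g p \<subseteq> earlier_orbits g p"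
  unfolding earlier_orbits_def using orbit_invariant by blast

lemma card_of_earlier_orbits_ordLess:
  assumes "p \<in> block_field |B|"
  shows "|earlier_orbits g p| <o |B|"
proof -
  let ?P = "{q. (q, p) \<in> Ix - Id}"
  have "earlier_orbits g p \<subseteq> (\<lambda>(q, k). (u ^^ k) (g q)) ` (?P \<times> UNIV)"
    unfolding earlier_orbits_def orbit_def by auto
  then have "|earlier_orbits g p| \<le>o |?P \<times> (UNIV :: nat set)|"
    by (rule ordLeq_transitive[OF card_of_mono1 card_of_image])
  then show ?thesis
    by (rule ordLeq_ordLess_trans[OF _ card_of_Times_nat_ordLess[OF
          card_of_earlier_indices_ordLess[OF assms] uncountable_B]])
qed

lemma exists_indep_pair_mod_earlier:
  assumes "p \<in> block_field |B|"
  shows "\<exists>y. indep_pair_mod (span (earlier_orbits g p)) y"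
  using exists_indep_pair_mod[OF independent_B span_B no_dominant_eigenvalue
      card_of_earlier_orbits_ordLess[OF assms] earlier_orbits_invariant] .

text \<open>Block starts are limit indices, where no dimension bound is required; there the
  generator may be the basis vector of the block, which makes the strata exhaust \<open>V\<close>.\<close>

definition generator_step :: "('b option \<times> nat \<Rightarrow> 'b) \<Rightarrow> 'b option \<times> nat \<Rightarrow> 'b" where
  "generator_step g p =
     (if fst p \<noteq> None \<and> snd p = 0 \<and> the (fst p) \<notin> span (earlier_orbits g p) then the (fst p)
      else (SOME y. indep_pair_mod (span (earlier_orbits g p)) y))"

definition generator :: "'b option \<times> nat \<Rightarrow> 'b" where
  "generator = wfrec (Ix - Id) generator_step"

lemma generator_eq: "generator p = generator_step generator p"
proof -
  have "generator p = generator_step (cut generator (Ix - Id) p) p"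
    unfolding generator_def by (rule wfrec[OF wf_block_order[OF card_of_Well_order]])
  moreover have "earlier_orbits (cut generator (Ix - Id) p) p = earlier_orbits generator p"
    unfolding earlier_orbits_def cut_def by auto
  ultimately show ?thesis unfolding generator_step_def by simp
qed

abbreviation Earlier :: "'b option \<times> nat \<Rightarrow> 'b set" where
  "Earlier p \<equiv> earlier_orbits generator p"

lemma generator_props:
  assumes "p \<in> block_field |B|"
  shows generator_not_in_earlier: "generator p \<notin> span (Earlier p)"
    and generator_indep_pair: "(\<And>b. p \<noteq> (Some b, 0)) \<Longrightarrow> indep_pair_mod (span (Earlier p)) (generator p)"
    and basis_vector_generator: "p = (Some b, 0) \<Longrightarrow> b \<in> span (Earlier p) \<or> generator p = b"
proof -
  have pick: "indep_pair_mod (span (Earlier p)) (SOME y. indep_pair_mod (span (Earlier p)) y)"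
    using exists_indep_pair_mod_earlier[OF assms] by (rule someI_ex)
  show "generator p \<notin> span (Earlier p)"
    using generator_eq[of p] indep_pair_mod_not_in[OF pick]
    by (cases "fst p \<noteq> None \<and> snd p = 0 \<and> the (fst p) \<notin> span (Earlier p)")
       (simp_all add: generator_step_def)
  show "indep_pair_mod (span (Earlier p)) (generator p)" if "\<And>b. p \<noteq> (Some b, 0)"
    using generator_eq[of p] pick that by (cases p) (auto simp: generator_step_def)
  show "b \<in> span (Earlier p) \<or> generator p = b" if "p = (Some b, 0)"
    using generator_eq[of p] that by (simp add: generator_step_def)
qed

definition stratum :: "'b option \<times> nat \<Rightarrow> 'b set" where
  "stratum p = span (Earlier p \<union> orbit (generator p))"

lemma generator_in_stratum: "generator p \<in> stratum p"
  unfolding stratum_def using self_in_orbit span_superset by blast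

lemma basis_vector_in_stratum:
  assumes "b \<in> B"
  shows "b \<in> stratum (Some b, 0)"
proof -
  have "(Some b, 0) \<in> block_field |B|" using assms by (simp add: block_field_def Field_card_of)
  then have "b \<in> span (Earlier (Some b, 0)) \<or> generator (Some b, 0) = b"
    by (rule basis_vector_generator) simp
  moreover have "span (Earlier (Some b, 0)) \<subseteq> stratum (Some b, 0)"
    unfolding stratum_def by (rule span_mono) blast
  ultimately show ?thesis using generator_in_stratum[of "(Some b, 0)"] by auto
qed

lemma earlier_orbits_mono:
  assumes "(q, p) \<in> Ix - Id"
  shows "Earlier q \<union> orbit (generator q) \<subseteq> Earlier p"
  using assms trans_Ix_strict unfolding earlier_orbits_def trans_def by blast

lemma msum_earlier_strata:
  "msum scale {stratum q | q. q \<in> Field Ix \<and> (q, p) \<in> Ix \<and> q \<noteq> p} = span (Earlier p)"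
  (is "msum scale ?F = _")
  unfolding msum_def span_eq
proof
  have "stratum q \<subseteq> span (Earlier p)" if "(q, p) \<in> Ix - Id" for q
    unfolding stratum_def using span_mono[OF earlier_orbits_mono[OF that]] by simp
  then show "\<Union>?F \<subseteq> span (Earlier p)" by blast
  have "orbit (generator q) \<subseteq> stratum q" for q
    unfolding stratum_def using span_superset by blast
  then have "Earlier p \<subseteq> \<Union>?F" unfolding earlier_orbits_def by (blast intro: FieldI1)
  then show "Earlier p \<subseteq> span (\<Union>?F)" using span_superset by blast
qed

lemma stratum_eq_span_earlier_span:
  "stratum p = span (span (Earlier p) \<union> orbit (generator p))"
proof -
  let ?S = "Earlier p \<union> orbit (generator p)" and ?T = "span (Earlier p) \<union> orbit (generator p)"
  have "?S \<subseteq> ?T" using span_superset by blast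
  moreover have "?T \<subseteq> span ?S"
    using span_mono[of "Earlier p" ?S] span_superset[of ?S] by blast
  ultimately show ?thesis unfolding stratum_def span_eq using span_superset[of ?T] by blast
qed

lemma strat_dim_stratum_ge_2:
  assumes "indep_pair_mod (span (Earlier p)) (generator p)"
  shows "strat_dim scale Ix stratum p \<ge> 2"
proof -
  let ?S = "{generator p, u (generator p)}"
  have "card ?S = 2" using assms unfolding indep_pair_mod_def by simp
  moreover have "?S \<subseteq> stratum p"
    unfolding stratum_def using self_in_orbit image_in_orbit span_superset by blast
  then have "enat (card ?S) \<le> qdim scale (stratum p) (span (Earlier p))"
    using assms unfolding qdim_def indep_pair_mod_def by (blast intro: Sup_upper)
  ultimately show ?thesis
    unfolding strat_dim_def msum_earlier_strata by (simp add: numeral_eq_enat)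
qed

lemma good_stratification_strata: "good_stratification scale u Ix stratum"
  unfolding good_stratification_def stratification_def Let_def msum_earlier_strata
proof (intro conjI ballI impI)
  show "Well_order Ix" by (rule Well_order_Ix)
next
  fix p
  have "u ` (Earlier p \<union> orbit (generator p)) \<subseteq> Earlier p \<union> orbit (generator p)"
    using earlier_orbits_invariant orbit_invariant by blast
  then show "submodule scale u (stratum p)"
    unfolding submodule_def stratum_def using span_invariant by simp
next
  fix p q assume "(q, p) \<in> Ix"
  then have "q = p \<or> Earlier q \<union> orbit (generator q) \<subseteq> Earlier p \<union> orbit (generator p)"
    using earlier_orbits_mono[of q p] by blast
  then show "stratum q \<subseteq> stratum p" unfolding stratum_def using span_mono by blast
next
  fix p assume "p \<in> Field Ix"
  then have p: "p \<in> block_field |B|" by (simp add: Field_block_order)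
  show "\<not> stratum p \<subseteq> span (Earlier p)"
    using generator_in_stratum generator_not_in_earlier[OF p] by blast
  show "monogenous_quot scale u (stratum p) (span (Earlier p))"
    unfolding monogenous_quot_def
    using generator_in_stratum stratum_eq_span_earlier_span[of p] unfolding orbit_def by blast
  assume "is_minimum Ix p \<or> (\<exists>q\<in>Field Ix. is_successor Ix p q)"
  then have "p \<noteq> (Some b, 0)" for b
    using block_start_not_minimum[of "|B|" b] block_start_not_successor[OF card_of_Well_order, of B b]
    by auto
  then show "strat_dim scale Ix stratum p \<ge> 2"
    by (intro strat_dim_stratum_ge_2 generator_indep_pair[OF p]) blast
next
  fix p assume "p \<in> Field Ix"
  then have "(p, (fst p, Suc (snd p))) \<in> Ix - Id"
    by (intro block_order_Suc) (simp add: Field_block_order)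
  then show "\<exists>q\<in>Field Ix. (p, q) \<in> Ix \<and> p \<noteq> q" by (blast intro: FieldI2)
next
  have "B \<subseteq> \<Union> (stratum ` Field Ix)"
    using basis_vector_in_stratum by (force simp: Field_block_order block_field_def Field_card_of)
  then show "msum scale (stratum ` Field Ix) = UNIV"
    unfolding msum_def using span_mono[of B] span_B by blast
qed

end


lemma good_stratification_dir_image:
  assumes good: "good_stratification scale u r M" and inj: "inj_on f (Field r)"
  shows "good_stratification scale u (dir_image r f) (M \<circ> inv_into (Field r) f)"
proof -
  let ?r = "dir_image r f" and ?M = "M \<circ> inv_into (Field r) f"
  have Field: "Field ?r = f ` Field r" by (rule dir_image_Field)
  have eq: "f a = f b \<longleftrightarrow> a = b" if "a \<in> Field r" "b \<in> Field r" for a b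
    using inj that by (simp add: inj_on_eq_iff)
  have rel: "(f a, f b) \<in> ?r \<longleftrightarrow> (a, b) \<in> r" if "a \<in> Field r" "b \<in> Field r" for a b
  proof
    assume "(f a, f b) \<in> ?r"
    then obtain a' b' where "f a = f a'" "f b = f b'" "(a', b') \<in> r" unfolding dir_image_def by auto
    then show "(a, b) \<in> r" using that eq FieldI1 FieldI2 by metis
  qed (auto simp: dir_image_def)
  have inv: "inv_into (Field r) f (f a) = a" if "a \<in> Field r" for a
    using inj that by simp
  have earlier: "{M (inv_into (Field r) f \<beta>) | \<beta>. \<beta> \<in> f ` Field r \<and> (\<beta>, f \<alpha>) \<in> ?r \<and> \<beta> \<noteq> f \<alpha>}
      = {M \<beta> | \<beta>. \<beta> \<in> Field r \<and> (\<beta>, \<alpha>) \<in> r \<and> \<beta> \<noteq> \<alpha>}" (is "?L = ?R") if "\<alpha> \<in> Field r" for \<alpha>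
  proof (intro equalityI subsetI)
    fix X assume "X \<in> ?L"
    then obtain b where b: "b \<in> Field r" "X = M (inv_into (Field r) f (f b))"
      "(f b, f \<alpha>) \<in> ?r" "f b \<noteq> f \<alpha>" by blast
    then have "X = M b" "(b, \<alpha>) \<in> r" "b \<noteq> \<alpha>" using rel[OF b(1) that] inv[OF b(1)] by auto
    then show "X \<in> ?R" using b(1) by blast
  next
    fix X assume "X \<in> ?R"
    then obtain b where b: "b \<in> Field r" "X = M b" "(b, \<alpha>) \<in> r" "b \<noteq> \<alpha>" by blast
    then have "X = M (inv_into (Field r) f (f b))" "(f b, f \<alpha>) \<in> ?r" "f b \<noteq> f \<alpha>"
      using that by (simp_all add: rel eq inv)
    then show "X \<in> ?L" using b(1) by blast
  qed
  have "Well_order r" using good unfolding good_stratification_def stratification_def by blast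
  then have "Well_order ?r" by (rule Well_order_dir_image[OF _ inj])
  moreover have "?M ` Field ?r = M ` Field r"
    unfolding Field image_image by (rule image_cong) (simp_all add: inv)
  moreover have "is_minimum ?r (f \<alpha>) \<longleftrightarrow> is_minimum r \<alpha>" if "\<alpha> \<in> Field r" for \<alpha>
    unfolding is_minimum_def Field using that rel by auto
  moreover have "is_successor ?r (f \<alpha>) (f \<beta>) \<longleftrightarrow> is_successor r \<alpha> \<beta>"
    if "\<alpha> \<in> Field r" "\<beta> \<in> Field r" for \<alpha> \<beta>
    unfolding is_successor_def Field using that rel eq by auto
  ultimately show ?thesis
    using good unfolding good_stratification_def stratification_def strat_dim_def Let_def Field
    by (simp add: earlier inv rel eq cong: conj_cong)
qed

theorem proposition4:
  fixes scale :: "'a::field \<Rightarrow> 'b::ab_group_add \<Rightarrow> 'b"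
    and u :: "'b \<Rightarrow> 'b"
  assumes "vector_space scale"
    and "\<exists>B. basis_of scale UNIV B \<and> uncountable B"
    and "Vector_Spaces.linear scale scale u"
    and "\<forall>lam. \<not> dominant_eigenvalue scale u lam"
  shows "\<exists>(r :: ('b \<times> 'b) set) Mf. good_stratification scale u r Mf"
proof -
  obtain B where "basis_of scale UNIV B" and "uncountable B" using assms(2) by blast
  then interpret strata_construction scale u B
    using assms(1,3,4)
    unfolding strata_construction_def strata_construction_axioms_def endomorphism_def
      endomorphism_axioms_def basis_of_def
    by auto
  have "infinite (insert None (Some ` B))" using infinite_B finite_imageD[of Some B] by auto
  then have "|Field Ix| \<le>o |B|"
    unfolding Field_block_order block_field_def Field_card_of
    by (rule ordLeq_transitive[OF card_of_Times_nat_ordLeq card_of_option_image_ordLeq[OF infinite_B]])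
  then have "|Field Ix| \<le>o |UNIV :: 'b set|" by (rule ordLeq_transitive[OF _ card_of_mono1[OF subset_UNIV]])
  then obtain f :: "'b option \<times> nat \<Rightarrow> 'b" where "inj_on f (Field Ix)"
    by (auto simp flip: card_of_ordLeq)
  then show ?thesis using good_stratification_dir_image[OF good_stratification_strata] by blast
qed

end
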